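(* Let $a<b$, let $F:(a,b)\to\mathcal{K}(\mathbb{R}^n)$ and let $x_0\in(a,b)$. (i) If $F$ is metrically differentiable from the right (respectively, from the left) at $x_0$, then $F$ is right (respectively, left) continuous at $x_0$ with respect to the Hausdorff metric, i.e. $\lim_{x\to x_0^+}\mathrm{haus}(F(x),F(x_0))=0$ (respectively, $\lim_{x\to x_0^-}\mathrm{haus}(F(x),F(x_0))=0$). (ii) If $F$ is constant on $(a,b)$, then for every $x\in(a,b)$ and every $y\in F(x)$ one has $D^M_+F(x)|_y=\{0\}$ and $D^M_-F(x)|_y=\{0\}$. (iii) If $F$ is metrically differentiable from the right (respectively, from the left) at $x_0$ and $y_0\in F(x_0)$ is such that $D^M_+F(x_0)|_{y_0}\neq\{0\}$ (respectively, $D^M_-F(x_0)|_{y_0}\neq\{0\}$), then $(x_0,y_0)$ lies on the boundary (in $\mathbb{R}\times\mathbb{R}^n$) of $\mathrm{Graph}(F)=\{(x,y): x\in(a,b),\ y\in F(x)\}$.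
   Context: $\mathcal{K}(\mathbb{R}^n)$ is the set of nonempty compact subsets of $\mathbb{R}^n$, $|\cdot|$ the Euclidean norm, $\mathrm{dist}(x,A)=\min_{a\in A}|x-a|$, and $\mathrm{haus}$ the Hausdorff distance. For $a\in\mathbb{R}^n$, $B\in\mathcal{K}(\mathbb{R}^n)$, $\Pi_B(a)=\{b\in B: |a-b|=\mathrm{dist}(a,B)\}$. For $A,B\in\mathcal{K}(\mathbb{R}^n)$ the set of metric pairs is $\Pi(A,B)=\{(a,b)\in A\times B: a\in\Pi_A(b)\text{ or } b\in\Pi_B(a)\}$. For $x_0\neq x$ in $(a,b)$ and $y_0\in F(x_0)$, the first metric divided difference anchored at $y_0$ is $[x_0,x]^MF|_{y_0}=\{\frac{y-y_0}{x-x_0}: (y_0,y)\in\Pi(F(x_0),F(x))\}$. $F$ is metrically differentiable from the right at $x_0$ if for every $y\in F(x_0)$ there is a nonempty set $D^M_+F(x_0)|_y$ of vectors such that for every $\epsilon>0$ there is $\delta>0$ with $\sup_{y\in F(x_0)}\mathrm{haus}(D^M_+F(x_0)|_y,[x_0,x]^MF|_y)<\epsilon$ whenever $0<x-x_0<\delta$; $D^M_+F(x_0)|_y$ is the right metric derivative of $F$ at $x_0$ anchored at $y$. Metric differentiability from the left and $D^M_-F(x_0)|_y$ are defined in the same way with $0<x_0-x<\delta$. *)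

theory Defs
  imports "HOL-Analysis.Analysis"
begin

text \<open>Hausdorff distance (intended for nonempty bounded sets).\<close>
definition haus :: "'a::euclidean_space set \<Rightarrow> 'a set \<Rightarrow> real" where
  "haus A B = max (SUP x\<in>A. infdist x B) (SUP y\<in>B. infdist y A)"

definition metric_proj :: "'a::euclidean_space set \<Rightarrow> 'a \<Rightarrow> 'a set" where
  "metric_proj B a = {b \<in> B. dist a b = infdist a B}"

definition metric_pairs :: "'a::euclidean_space set \<Rightarrow> 'a set \<Rightarrow> ('a \<times> 'a) set" where
  "metric_pairs A B = {(p, q). p \<in> A \<and> q \<in> B \<and> (p \<in> metric_proj A q \<or> q \<in> metric_proj B p)}"

definition metric_divdiff ::
  "(real \<Rightarrow> 'a::euclidean_space set) \<Rightarrow> real \<Rightarrow> real \<Rightarrow> 'a \<Rightarrow> 'a set" where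
  "metric_divdiff F x0 x y0 =
     {(1 / (x - x0)) *\<^sub>R (y - y0) | y. (y0, y) \<in> metric_pairs (F x0) (F x)}"

text \<open>D is the right metric derivative of F (defined on the interval (a,b)) at x0:
  D y is the derivative anchored at y, for y in F x0.  Boundedness of D y is implied by
  the Hausdorff distance to a compact set being finite; it is stated explicitly because
  the real-valued Sup used in haus is meaningless for unbounded sets.\<close>
definition has_right_metric_derivative ::
  "real \<Rightarrow> real \<Rightarrow> (real \<Rightarrow> 'a::euclidean_space set) \<Rightarrow> real \<Rightarrow> ('a \<Rightarrow> 'a set) \<Rightarrow> bool" where
  "has_right_metric_derivative a b F x0 D \<longleftrightarrow>
     (\<forall>y\<in>F x0. D y \<noteq> {} \<and> bounded (D y)) \<and>
     (\<forall>\<epsilon>>0. \<exists>\<delta>>0. \<forall>x\<in>{a<..<b}. 0 < x - x0 \<and> x - x0 < \<delta> \<longrightarrow>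
        (\<forall>y\<in>F x0. haus (D y) (metric_divdiff F x0 x y) < \<epsilon>))"

definition has_left_metric_derivative ::
  "real \<Rightarrow> real \<Rightarrow> (real \<Rightarrow> 'a::euclidean_space set) \<Rightarrow> real \<Rightarrow> ('a \<Rightarrow> 'a set) \<Rightarrow> bool" where
  "has_left_metric_derivative a b F x0 D \<longleftrightarrow>
     (\<forall>y\<in>F x0. D y \<noteq> {} \<and> bounded (D y)) \<and>
     (\<forall>\<epsilon>>0. \<exists>\<delta>>0. \<forall>x\<in>{a<..<b}. 0 < x0 - x \<and> x0 - x < \<delta> \<longrightarrow>
        (\<forall>y\<in>F x0. haus (D y) (metric_divdiff F x0 x y) < \<epsilon>))"

definition right_metric_differentiable ::
  "real \<Rightarrow> real \<Rightarrow> (real \<Rightarrow> 'a::euclidean_space set) \<Rightarrow> real \<Rightarrow> bool" where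
  "right_metric_differentiable a b F x0 \<longleftrightarrow> (\<exists>D. has_right_metric_derivative a b F x0 D)"

definition left_metric_differentiable ::
  "real \<Rightarrow> real \<Rightarrow> (real \<Rightarrow> 'a::euclidean_space set) \<Rightarrow> real \<Rightarrow> bool" where
  "left_metric_differentiable a b F x0 \<longleftrightarrow> (\<exists>D. has_left_metric_derivative a b F x0 D)"

definition mgraph :: "real \<Rightarrow> real \<Rightarrow> (real \<Rightarrow> 'a set) \<Rightarrow> (real \<times> 'a) set" where
  "mgraph a b F = {(x, y). x \<in> {a<..<b} \<and> y \<in> F x}"

end

(* Metric pairs realise the Hausdorff distance: every pair (y, z) of F x0 and F x satisfies
   |y - z| <= haus (F x) (F x0), and haus is the largest of these distances.  A metric
   derivative keeps the divided differences bounded for x near x0, so haus (F x) (F x0) is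
   O(|x - x0|), which is one-sided continuity.  A derivative anchored at y must be {0} as soon
   as the divided differences anchored at y are eventually {0}.  This happens for constant F,
   whose metric pairs are diagonal, and also when (x0, y0) is interior to the graph: then for
   x near x0 we have y0 in F x, and every partner z of y0 is so close that z lies in F x0,
   which makes the pair (y0, z) degenerate. *)

theory Submission
  imports Defs
begin

lemma bdd_above_infdist_image:
  fixes A B :: "'a::metric_space set"
  assumes "bounded A" "B \<noteq> {}"
  shows "bdd_above ((\<lambda>x. infdist x B) ` A)"
proof -
  obtain q where q: "q \<in> B" using assms(2) by blast
  obtain e where e: "\<forall>x\<in>A. dist q x \<le> e" using assms(1) bounded_any_center by blast
  show ?thesis
    by (rule bdd_aboveI2[of _ _ e]) (metis e q infdist_le dist_commute order_trans)
qed

lemma infdist_le_haus: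
  fixes A B :: "'a::euclidean_space set"
  assumes "bounded A" "B \<noteq> {}" "p \<in> A"
  shows "infdist p B \<le> haus A B"
proof -
  have "infdist p B \<le> (SUP x\<in>A. infdist x B)"
    using bdd_above_infdist_image[OF assms(1,2)] assms(3) by (rule cSUP_upper2) simp
  then show ?thesis by (simp add: haus_def)
qed

lemma haus_sym: "haus A B = haus B A"
  by (simp add: haus_def max.commute)

lemma haus_nonneg:
  fixes A B :: "'a::euclidean_space set"
  assumes "bounded A" "A \<noteq> {}" "B \<noteq> {}"
  shows "0 \<le> haus A B"
  using assms by (meson ex_in_conv infdist_le_haus infdist_nonneg order_trans)

lemma haus_less_imp_dist_less:
  fixes A B :: "'a::euclidean_space set"
  assumes "bounded A" "B \<noteq> {}" "p \<in> A" "haus A B < e"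
  obtains q where "q \<in> B" "dist p q < e"
proof -
  have "(INF q\<in>B. dist p q) < e"
    using infdist_le_haus[OF assms(1-3)] assms(4) infdist_notempty[OF assms(2)] by simp
  moreover have "bdd_below (dist p ` B)" by (rule bdd_belowI2[of _ 0]) simp
  ultimately show ?thesis using that cINF_less_iff[of B "dist p" e] assms(2) by blast
qed

lemma norm_le_if_haus_less:
  fixes A B :: "'a::euclidean_space set"
  assumes "bounded A" "B \<noteq> {}" "haus A B < e" "\<forall>q\<in>B. norm q \<le> M" "p \<in> A"
  shows "norm p \<le> M + e"
proof -
  obtain q where "q \<in> B" "dist p q < e"
    using haus_less_imp_dist_less[OF assms(1,2,5,3)] by blast
  moreover have "norm p \<le> norm q + dist p q"
    using norm_triangle_ineq2[of p q] by (simp add: dist_norm)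
  ultimately show ?thesis using assms(4) by fastforce
qed

lemma haus_le:
  fixes A B :: "'a::euclidean_space set"
  assumes "A \<noteq> {}" "B \<noteq> {}" "\<forall>p\<in>A. infdist p B \<le> K" "\<forall>q\<in>B. infdist q A \<le> K"
  shows "haus A B \<le> K"
  unfolding haus_def using assms by (auto intro!: cSUP_least)

lemma metric_pairs_nearest_right:
  fixes A B :: "'a::euclidean_space set"
  assumes "compact B" "B \<noteq> {}" "p \<in> A"
  obtains q where "q \<in> B" "dist p q = infdist p B" "(p, q) \<in> metric_pairs A B"
proof -
  obtain q where "q \<in> B" "infdist p B = dist p q"
    using infdist_attains_inf[OF compact_imp_closed[OF assms(1)] assms(2)] by metis
  then show ?thesis using that assms(3) by (auto simp: metric_pairs_def metric_proj_def)
qed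

lemma metric_pairs_nearest_left:
  fixes A B :: "'a::euclidean_space set"
  assumes "compact A" "A \<noteq> {}" "q \<in> B"
  obtains p where "p \<in> A" "dist q p = infdist q A" "(p, q) \<in> metric_pairs A B"
proof -
  obtain p where "p \<in> A" "infdist q A = dist q p"
    using infdist_attains_inf[OF compact_imp_closed[OF assms(1)] assms(2)] by metis
  then show ?thesis using that assms(3) by (auto simp: metric_pairs_def metric_proj_def)
qed

lemma metric_pair_eq_if_mem_both:
  assumes "(p, q) \<in> metric_pairs A B" "p \<in> B" "q \<in> A"
  shows "p = q"
  using assms by (auto simp: metric_pairs_def metric_proj_def)

lemma dist_metric_pair_le_haus:
  fixes A B :: "'a::euclidean_space set"
  assumes "bounded A" "bounded B" "A \<noteq> {}" "B \<noteq> {}" "(p, q) \<in> metric_pairs A B"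
  shows "dist p q \<le> haus A B"
  using assms infdist_le_haus[of A B p] infdist_le_haus[of B A q]
  by (auto simp: metric_pairs_def metric_proj_def haus_sym dist_commute)

lemma haus_le_metric_pairs:
  fixes A B :: "'a::euclidean_space set"
  assumes "compact A" "compact B" "A \<noteq> {}" "B \<noteq> {}"
    and "\<forall>(p, q)\<in>metric_pairs A B. dist p q \<le> K"
  shows "haus A B \<le> K"
proof (rule haus_le[OF assms(3,4)])
  show "\<forall>p\<in>A. infdist p B \<le> K"
    by (metis assms(2,4,5) case_prodD metric_pairs_nearest_right)
  show "\<forall>q\<in>B. infdist q A \<le> K"
    by (metis assms(1,3,5) case_prodD dist_commute metric_pairs_nearest_left)
qed

lemma mem_metric_divdiff:
  "v \<in> metric_divdiff F x0 x y0 \<longleftrightarrow>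
     (\<exists>y. v = (1 / (x - x0)) *\<^sub>R (y - y0) \<and> (y0, y) \<in> metric_pairs (F x0) (F x))"
  by (auto simp: metric_divdiff_def)

lemma metric_divdiff_nonempty:
  fixes F :: "real \<Rightarrow> 'a::euclidean_space set"
  assumes "compact (F x)" "F x \<noteq> {}" "y0 \<in> F x0"
  shows "metric_divdiff F x0 x y0 \<noteq> {}"
  using metric_pairs_nearest_right[OF assms] mem_metric_divdiff by (metis empty_iff)

lemma metric_divdiff_uniformly_bounded:
  fixes F :: "real \<Rightarrow> 'a::euclidean_space set"
  assumes "compact (F x0)" "compact (F x)"
  obtains M where "\<forall>y0\<in>F x0. \<forall>v\<in>metric_divdiff F x0 x y0. norm v \<le> M"
proof -
  obtain R0 where R0: "\<forall>y\<in>F x0. norm y \<le> R0"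
    using assms(1) compact_imp_bounded bounded_iff by metis
  obtain R where R: "\<forall>y\<in>F x. norm y \<le> R"
    using assms(2) compact_imp_bounded bounded_iff by metis
  have "norm v \<le> \<bar>1 / (x - x0)\<bar> * (R + R0)"
    if y0: "y0 \<in> F x0" and v: "v \<in> metric_divdiff F x0 x y0" for y0 v
  proof -
    obtain y where y: "v = (1 / (x - x0)) *\<^sub>R (y - y0)" "(y0, y) \<in> metric_pairs (F x0) (F x)"
      using v mem_metric_divdiff by blast
    have "norm (y - y0) \<le> R + R0"
      using R0 R y(2) y0 norm_triangle_ineq4[of y y0] by (force simp: metric_pairs_def)
    then show ?thesis using y(1) by (simp add: divide_right_mono)
  qed
  then show ?thesis using that by blast
qed

lemma bounded_metric_divdiff:
  fixes F :: "real \<Rightarrow> 'a::euclidean_space set"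
  assumes "compact (F x0)" "compact (F x)" "y0 \<in> F x0"
  shows "bounded (metric_divdiff F x0 x y0)"
  using metric_divdiff_uniformly_bounded[OF assms(1,2)] assms(3) bounded_iff by metis

lemma metric_divdiff_eq_zero:
  fixes F :: "real \<Rightarrow> 'a::euclidean_space set"
  assumes "y0 \<in> F x0" "y0 \<in> F x"
    and "\<And>z. (y0, z) \<in> metric_pairs (F x0) (F x) \<Longrightarrow> z \<in> F x0"
  shows "metric_divdiff F x0 x y0 = {0}"
proof -
  have "(y0, y0) \<in> metric_pairs (F x0) (F x)"
    using assms(1,2) by (simp add: metric_pairs_def metric_proj_def)
  moreover have "z = y0" if "(y0, z) \<in> metric_pairs (F x0) (F x)" for z
    using metric_pair_eq_if_mem_both[OF that assms(2) assms(3)[OF that]] by simp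
  ultimately show ?thesis by (auto simp: metric_divdiff_def)
qed

lemma metric_divdiff_const:
  fixes F :: "real \<Rightarrow> 'a::euclidean_space set"
  assumes "F x = F x0" "y0 \<in> F x0"
  shows "metric_divdiff F x0 x y0 = {0}"
  using assms by (intro metric_divdiff_eq_zero) (auto simp: metric_pairs_def)

lemma haus_le_metric_divdiff:
  fixes F :: "real \<Rightarrow> 'a::euclidean_space set"
  assumes "compact (F x0)" "F x0 \<noteq> {}" "compact (F x)" "F x \<noteq> {}" "x \<noteq> x0"
    and "\<forall>y0\<in>F x0. \<forall>v\<in>metric_divdiff F x0 x y0. norm v \<le> K"
  shows "haus (F x) (F x0) \<le> \<bar>x - x0\<bar> * K"
proof -
  have "dist y0 y \<le> \<bar>x - x0\<bar> * K" if "(y0, y) \<in> metric_pairs (F x0) (F x)" for y0 y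
  proof -
    have "(1 / (x - x0)) *\<^sub>R (y - y0) \<in> metric_divdiff F x0 x y0"
      using that mem_metric_divdiff by blast
    moreover have "y0 \<in> F x0" using that by (simp add: metric_pairs_def)
    ultimately have "norm ((1 / (x - x0)) *\<^sub>R (y - y0)) \<le> K" using assms(6) by blast
    then have "norm (y - y0) / \<bar>x - x0\<bar> \<le> K" by simp
    then show ?thesis
      using assms(5) by (simp add: divide_le_eq mult.commute dist_norm norm_minus_commute)
  qed
  then have "haus (F x0) (F x) \<le> \<bar>x - x0\<bar> * K"
    using assms(1-4) by (intro haus_le_metric_pairs) auto
  then show ?thesis by (simp add: haus_sym)
qed

(* L stands for at_right x0 or at_left x0, so both one-sided derivatives are treated at once. *)
definition has_metric_derivative ::
  "(real \<Rightarrow> 'a::euclidean_space set) \<Rightarrow> real \<Rightarrow> ('a \<Rightarrow> 'a set) \<Rightarrow> real filter \<Rightarrow> bool" where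
  "has_metric_derivative F x0 D L \<longleftrightarrow>
     (\<forall>y\<in>F x0. D y \<noteq> {} \<and> bounded (D y)) \<and>
     (\<forall>\<epsilon>>0. \<forall>\<^sub>F x in L. \<forall>y\<in>F x0. haus (D y) (metric_divdiff F x0 x y) < \<epsilon>)"

lemma eventually_at_right_interval:
  fixes a b x0 :: real
  assumes "x0 \<in> {a<..<b}"
  shows "eventually P (at_right x0) \<longleftrightarrow> (\<exists>\<delta>>0. \<forall>x\<in>{a<..<b}. 0 < x - x0 \<and> x - x0 < \<delta> \<longrightarrow> P x)"
proof
  assume "eventually P (at_right x0)"
  then obtain c where "c > x0" "\<forall>y>x0. y < c \<longrightarrow> P y"
    by (auto simp: eventually_at_right_field)
  then show "\<exists>\<delta>>0. \<forall>x\<in>{a<..<b}. 0 < x - x0 \<and> x - x0 < \<delta> \<longrightarrow> P x"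
    by (intro exI[of _ "c - x0"]) auto
next
  assume "\<exists>\<delta>>0. \<forall>x\<in>{a<..<b}. 0 < x - x0 \<and> x - x0 < \<delta> \<longrightarrow> P x"
  then obtain \<delta> where "\<delta> > 0" "\<forall>x\<in>{a<..<b}. 0 < x - x0 \<and> x - x0 < \<delta> \<longrightarrow> P x"
    by blast
  then show "eventually P (at_right x0)"
    using assms unfolding eventually_at_right_field by (intro exI[of _ "min b (x0 + \<delta>)"]) auto
qed

lemma eventually_at_left_interval:
  fixes a b x0 :: real
  assumes "x0 \<in> {a<..<b}"
  shows "eventually P (at_left x0) \<longleftrightarrow> (\<exists>\<delta>>0. \<forall>x\<in>{a<..<b}. 0 < x0 - x \<and> x0 - x < \<delta> \<longrightarrow> P x)"
proof
  assume "eventually P (at_left x0)"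
  then obtain c where "c < x0" "\<forall>y>c. y < x0 \<longrightarrow> P y"
    by (auto simp: eventually_at_left_field)
  then show "\<exists>\<delta>>0. \<forall>x\<in>{a<..<b}. 0 < x0 - x \<and> x0 - x < \<delta> \<longrightarrow> P x"
    by (intro exI[of _ "x0 - c"]) auto
next
  assume "\<exists>\<delta>>0. \<forall>x\<in>{a<..<b}. 0 < x0 - x \<and> x0 - x < \<delta> \<longrightarrow> P x"
  then obtain \<delta> where "\<delta> > 0" "\<forall>x\<in>{a<..<b}. 0 < x0 - x \<and> x0 - x < \<delta> \<longrightarrow> P x"
    by blast
  then show "eventually P (at_left x0)"
    using assms unfolding eventually_at_left_field by (intro exI[of _ "max a (x0 - \<delta>)"]) auto
qed

lemma has_right_metric_derivative_iff:
  assumes "x0 \<in> {a<..<b}"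
  shows "has_right_metric_derivative a b F x0 D \<longleftrightarrow> has_metric_derivative F x0 D (at_right x0)"
  by (simp add: has_right_metric_derivative_def has_metric_derivative_def
      eventually_at_right_interval[OF assms])

lemma has_left_metric_derivative_iff:
  assumes "x0 \<in> {a<..<b}"
  shows "has_left_metric_derivative a b F x0 D \<longleftrightarrow> has_metric_derivative F x0 D (at_left x0)"
  by (simp add: has_left_metric_derivative_def has_metric_derivative_def
      eventually_at_left_interval[OF assms])

lemma has_metric_derivative_imp_divdiff_bounded:
  fixes F :: "real \<Rightarrow> 'a::euclidean_space set"
  assumes "has_metric_derivative F x0 D L" "L \<noteq> bot" "compact (F x0)"
    and "\<forall>\<^sub>F x in L. compact (F x) \<and> F x \<noteq> {}"
  obtains K where "\<forall>\<^sub>F x in L. \<forall>y\<in>F x0. \<forall>v\<in>metric_divdiff F x0 x y. norm v \<le> K"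
proof -
  have D: "\<forall>y\<in>F x0. D y \<noteq> {} \<and> bounded (D y)"
    using assms(1) by (simp add: has_metric_derivative_def)
  have "\<forall>\<^sub>F x in L. \<forall>y\<in>F x0. haus (D y) (metric_divdiff F x0 x y) < 1"
    using assms(1) by (simp add: has_metric_derivative_def)
  with assms(4) have near: "\<forall>\<^sub>F x in L. (compact (F x) \<and> F x \<noteq> {}) \<and>
      (\<forall>y\<in>F x0. haus (D y) (metric_divdiff F x0 x y) < 1)"
    by (rule eventually_conj)
  obtain x1 where x1: "compact (F x1)" "F x1 \<noteq> {}"
    "\<forall>y\<in>F x0. haus (D y) (metric_divdiff F x0 x1 y) < 1"
    using eventually_happens'[OF assms(2) near] by blast
  obtain M where M: "\<forall>y\<in>F x0. \<forall>v\<in>metric_divdiff F x0 x1 y. norm v \<le> M"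
    using metric_divdiff_uniformly_bounded[OF assms(3) x1(1)] by blast
  \<comment> \<open>D is bounded uniformly in y, being uniformly close to the divided differences at x1.\<close>
  have D_bound: "\<forall>d\<in>D y. norm d \<le> M + 1" if "y \<in> F x0" for y
    using norm_le_if_haus_less[of "D y" "metric_divdiff F x0 x1 y"] D M x1(3) that
      metric_divdiff_nonempty[OF x1(1,2) that] by blast
  have "norm v \<le> M + 1 + 1"
    if "compact (F x)" "\<forall>y\<in>F x0. haus (D y) (metric_divdiff F x0 x y) < 1"
      and "y \<in> F x0" "v \<in> metric_divdiff F x0 x y" for x y v
    using norm_le_if_haus_less[OF bounded_metric_divdiff[OF assms(3) that(1,3)]] D D_bound that
    by (metis haus_sym)
  with near show thesis
    by (intro that[of "M + 1 + 1"]) (auto elim: eventually_mono)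
qed

lemma has_metric_derivative_imp_haus_tendsto:
  fixes F :: "real \<Rightarrow> 'a::euclidean_space set"
  assumes "has_metric_derivative F x0 D L" "L \<le> at x0" "L \<noteq> bot" "compact (F x0)" "F x0 \<noteq> {}"
    and "\<forall>\<^sub>F x in L. compact (F x) \<and> F x \<noteq> {}"
  shows "((\<lambda>x. haus (F x) (F x0)) \<longlongrightarrow> 0) L"
proof -
  obtain K where K: "\<forall>\<^sub>F x in L. \<forall>y\<in>F x0. \<forall>v\<in>metric_divdiff F x0 x y. norm v \<le> K"
    using has_metric_derivative_imp_divdiff_bounded[OF assms(1,3,4,6)] by blast
  show ?thesis
  proof (rule tendsto_sandwich[of "\<lambda>_. 0" _ _ "\<lambda>x. \<bar>x - x0\<bar> * K"])
    show "\<forall>\<^sub>F x in L. 0 \<le> haus (F x) (F x0)"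
      using assms(6) by (rule eventually_mono) (simp add: haus_nonneg compact_imp_bounded assms(5))
    have "\<forall>\<^sub>F x in L. x \<noteq> x0"
      using filter_leD[OF assms(2) eventually_neq_at_within] .
    with K assms(6) show "\<forall>\<^sub>F x in L. haus (F x) (F x0) \<le> \<bar>x - x0\<bar> * K"
      by eventually_elim (use haus_le_metric_divdiff assms(4,5) in blast)
    have "((\<lambda>x. \<bar>x - x0\<bar> * K) \<longlongrightarrow> \<bar>x0 - x0\<bar> * K) (at x0)"
      by (intro tendsto_intros)
    then show "((\<lambda>x. \<bar>x - x0\<bar> * K) \<longlongrightarrow> 0) L"
      using tendsto_mono[OF assms(2)] by simp
  qed simp
qed

lemma has_metric_derivative_eq_zero:
  fixes F :: "real \<Rightarrow> 'a::euclidean_space set"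
  assumes "has_metric_derivative F x0 D L" "L \<noteq> bot" "y \<in> F x0"
    and "\<forall>\<^sub>F x in L. metric_divdiff F x0 x y = {0}"
  shows "D y = {0}"
proof -
  have D: "D y \<noteq> {}" "bounded (D y)"
    using assms(1,3) by (auto simp: has_metric_derivative_def)
  have "d = 0" if d: "d \<in> D y" for d
  proof (rule ccontr)
    assume "d \<noteq> 0"
    then have "\<forall>\<^sub>F x in L. \<forall>y\<in>F x0. haus (D y) (metric_divdiff F x0 x y) < norm d"
      using assms(1) by (simp add: has_metric_derivative_def)
    then have "\<forall>\<^sub>F x in L. haus (D y) (metric_divdiff F x0 x y) < norm d"
      by (rule eventually_mono) (use assms(3) in blast)
    with assms(4) have "\<forall>\<^sub>F x in L. haus (D y) {0} < norm d"
      by eventually_elim simp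
    then have "haus (D y) {0} < norm d"
      using eventually_happens'[OF assms(2)] by blast
    then show False
      using haus_less_imp_dist_less[of "D y" "{0}" d "norm d"] D(2) d by auto
  qed
  with D(1) show ?thesis by blast
qed

lemma has_metric_derivative_const:
  assumes "\<forall>\<^sub>F x in L. F x = F x0"
  shows "has_metric_derivative F x0 (\<lambda>_. {0}) L"
  using assms by (auto simp: has_metric_derivative_def haus_def metric_divdiff_const
      elim!: eventually_mono)

lemma eventually_metric_divdiff_eq_zero_if_interior:
  fixes F :: "real \<Rightarrow> 'a::euclidean_space set"
  assumes "((\<lambda>x. haus (F x) (F x0)) \<longlongrightarrow> 0) L" "L \<le> at x0"
    and "compact (F x0)" "F x0 \<noteq> {}" "\<forall>\<^sub>F x in L. compact (F x) \<and> F x \<noteq> {}"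
    and "(x0, y0) \<in> interior {(x, y). y \<in> F x}"
  shows "\<forall>\<^sub>F x in L. metric_divdiff F x0 x y0 = {0}"
proof -
  obtain r where r: "r > 0" "ball (x0, y0) r \<subseteq> {(x, y). y \<in> F x}"
    using assms(6) mem_interior by blast
  have "\<forall>\<^sub>F x in L. dist x x0 < r"
    using tendstoD[OF tendsto_mono[OF assms(2) tendsto_ident_at] r(1)] .
  moreover have "\<forall>\<^sub>F x in L. haus (F x) (F x0) < r"
    using order_tendstoD(2)[OF assms(1) r(1)] .
  ultimately show ?thesis
    using assms(5)
  proof eventually_elim
    case (elim x)
    have "y0 \<in> F x0" "y0 \<in> F x"
      using r elim(1) by (auto simp: dist_Pair_Pair subset_iff dist_commute)
    moreover have "z \<in> F x0" if "(y0, z) \<in> metric_pairs (F x0) (F x)" for z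
    proof -
      have "dist y0 z < r"
        using dist_metric_pair_le_haus[OF _ _ assms(4) _ that] elim assms(3)
        by (simp add: compact_imp_bounded haus_sym)
      then show ?thesis
        using r(2) by (auto simp: dist_Pair_Pair subset_iff)
    qed
    ultimately show ?case
      by (rule metric_divdiff_eq_zero)
  qed
qed

lemma has_metric_derivative_nonzero_imp_not_interior:
  fixes F :: "real \<Rightarrow> 'a::euclidean_space set"
  assumes "has_metric_derivative F x0 D L" "L \<le> at x0" "L \<noteq> bot" "compact (F x0)" "F x0 \<noteq> {}"
    and "\<forall>\<^sub>F x in L. compact (F x) \<and> F x \<noteq> {}"
    and "y0 \<in> F x0" "D y0 \<noteq> {0}"
  shows "(x0, y0) \<notin> interior {(x, y). y \<in> F x}"
  using has_metric_derivative_eq_zero[OF assms(1,3,7)] assms(8)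
    eventually_metric_divdiff_eq_zero_if_interior[OF
      has_metric_derivative_imp_haus_tendsto[OF assms(1-6)] assms(2,4-6)]
  by blast

lemma constant_metric_derivatives:
  fixes F :: "real \<Rightarrow> 'a::euclidean_space set"
  assumes "\<forall>x\<in>{a<..<b}. \<forall>x'\<in>{a<..<b}. F x = F x'" "x \<in> {a<..<b}"
  shows "right_metric_differentiable a b F x \<and> left_metric_differentiable a b F x \<and>
    (\<forall>D. has_right_metric_derivative a b F x D \<longrightarrow> (\<forall>y\<in>F x. D y = {0})) \<and>
    (\<forall>D. has_left_metric_derivative a b F x D \<longrightarrow> (\<forall>y\<in>F x. D y = {0}))"
proof -
  have "\<forall>\<^sub>F x' in at x. F x' = F x"
    using eventually_at_in_open'[OF open_greaterThanLessThan assms(2)]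
    by (rule eventually_mono) (use assms in blast)
  then have "\<forall>\<^sub>F x' in at_right x. F x' = F x" "\<forall>\<^sub>F x' in at_left x. F x' = F x"
    by (auto intro: filter_leD[OF at_le])
  then have "has_metric_derivative F x (\<lambda>_. {0}) (at_right x)"
    and "has_metric_derivative F x (\<lambda>_. {0}) (at_left x)"
    and "has_metric_derivative F x D (at_right x) \<Longrightarrow> y \<in> F x \<Longrightarrow> D y = {0}"
    and "has_metric_derivative F x D (at_left x) \<Longrightarrow> y \<in> F x \<Longrightarrow> D y = {0}" for D y
    by (simp_all add: has_metric_derivative_const has_metric_derivative_eq_zero
        metric_divdiff_const eventually_mono)
  then show ?thesis
    unfolding right_metric_differentiable_def left_metric_differentiable_def
      has_right_metric_derivative_iff[OF assms(2)] has_left_metric_derivative_iff[OF assms(2)]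
    by blast
qed

lemma mem_frontier_mgraph:
  assumes "x0 \<in> {a<..<b}" "y0 \<in> F x0" "(x0, y0) \<notin> interior {(x, y). y \<in> F x}"
  shows "(x0, y0) \<in> frontier (mgraph a b F)"
proof -
  have "mgraph a b F \<subseteq> {(x, y). y \<in> F x}"
    by (auto simp: mgraph_def)
  then have "(x0, y0) \<notin> interior (mgraph a b F)"
    using assms(3) interior_mono by blast
  moreover have "(x0, y0) \<in> closure (mgraph a b F)"
    using assms(1,2) closure_subset by (force simp: mgraph_def)
  ultimately show ?thesis by (simp add: frontier_def)
qed

lemma one_sided_at_properties:
  fixes F :: "real \<Rightarrow> 'a::euclidean_space set"
  assumes "\<forall>x\<in>{a<..<b}. compact (F x) \<and> F x \<noteq> {}" "x0 \<in> {a<..<b}"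
    and "L \<in> {at_right x0, at_left x0}"
  shows "L \<le> at x0" "L \<noteq> bot" "\<forall>\<^sub>F x in L. compact (F x) \<and> F x \<noteq> {}"
proof -
  show "L \<le> at x0" "L \<noteq> bot"
    using assms(3) by (auto simp: at_le eq_commute[of bot])
  have "\<forall>\<^sub>F x in at x0. compact (F x) \<and> F x \<noteq> {}"
    using eventually_at_in_open'[OF open_greaterThanLessThan assms(2)]
    by (rule eventually_mono) (use assms(1) in blast)
  then show "\<forall>\<^sub>F x in L. compact (F x) \<and> F x \<noteq> {}"
    using filter_leD[OF \<open>L \<le> at x0\<close>] by blast
qed

theorem mainTheorem1:
  fixes a b x0 :: real and F :: "real \<Rightarrow> 'a::euclidean_space set"
  assumes "a < b"
    and "\<forall>x\<in>{a<..<b}. compact (F x) \<and> F x \<noteq> {}"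
    and "x0 \<in> {a<..<b}"
  shows
    "(right_metric_differentiable a b F x0 \<longrightarrow>
        ((\<lambda>x. haus (F x) (F x0)) \<longlongrightarrow> 0) (at_right x0))
     \<and> (left_metric_differentiable a b F x0 \<longrightarrow>
        ((\<lambda>x. haus (F x) (F x0)) \<longlongrightarrow> 0) (at_left x0))
     \<and> ((\<forall>x\<in>{a<..<b}. \<forall>x'\<in>{a<..<b}. F x = F x') \<longrightarrow>
        (\<forall>x\<in>{a<..<b}.
           right_metric_differentiable a b F x \<and> left_metric_differentiable a b F x \<and>
           (\<forall>D. has_right_metric_derivative a b F x D \<longrightarrow> (\<forall>y\<in>F x. D y = {0})) \<and>
           (\<forall>D. has_left_metric_derivative a b F x D \<longrightarrow> (\<forall>y\<in>F x. D y = {0}))))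
     \<and> (\<forall>y0\<in>F x0. \<forall>D. has_right_metric_derivative a b F x0 D \<and> D y0 \<noteq> {0}
           \<longrightarrow> (x0, y0) \<in> frontier (mgraph a b F))
     \<and> (\<forall>y0\<in>F x0. \<forall>D. has_left_metric_derivative a b F x0 D \<and> D y0 \<noteq> {0}
           \<longrightarrow> (x0, y0) \<in> frontier (mgraph a b F))"
proof -
  have F_x0: "compact (F x0)" "F x0 \<noteq> {}"
    using assms(2,3) by auto
  note one_sided = one_sided_at_properties[OF assms(2,3)]
  have haus_tendsto: "((\<lambda>x. haus (F x) (F x0)) \<longlongrightarrow> 0) L"
    if "L \<in> {at_right x0, at_left x0}" "has_metric_derivative F x0 D L" for L D
    using has_metric_derivative_imp_haus_tendsto[OF that(2) one_sided(1,2)[OF that(1)] F_x0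
        one_sided(3)[OF that(1)]] .
  have frontier: "(x0, y0) \<in> frontier (mgraph a b F)"
    if "L \<in> {at_right x0, at_left x0}" "has_metric_derivative F x0 D L" "y0 \<in> F x0" "D y0 \<noteq> {0}"
    for L D y0
    using mem_frontier_mgraph[OF assms(3) that(3) has_metric_derivative_nonzero_imp_not_interior[OF
          that(2) one_sided(1,2)[OF that(1)] F_x0 one_sided(3)[OF that(1)] that(3,4)]] .
  note one_sided_iffs = right_metric_differentiable_def left_metric_differentiable_def
    has_right_metric_derivative_iff[OF assms(3)] has_left_metric_derivative_iff[OF assms(3)]
  show ?thesis
  proof (intro conjI)
    show "right_metric_differentiable a b F x0 \<longrightarrow>
        ((\<lambda>x. haus (F x) (F x0)) \<longlongrightarrow> 0) (at_right x0)"
      using haus_tendsto[of "at_right x0"] by (auto simp: one_sided_iffs)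
    show "left_metric_differentiable a b F x0 \<longrightarrow>
        ((\<lambda>x. haus (F x) (F x0)) \<longlongrightarrow> 0) (at_left x0)"
      using haus_tendsto[of "at_left x0"] by (auto simp: one_sided_iffs)
    show "\<forall>y0\<in>F x0. \<forall>D. has_right_metric_derivative a b F x0 D \<and> D y0 \<noteq> {0}
        \<longrightarrow> (x0, y0) \<in> frontier (mgraph a b F)"
      using frontier[of "at_right x0"] by (auto simp: one_sided_iffs)
    show "\<forall>y0\<in>F x0. \<forall>D. has_left_metric_derivative a b F x0 D \<and> D y0 \<noteq> {0}
        \<longrightarrow> (x0, y0) \<in> frontier (mgraph a b F)"
      using frontier[of "at_left x0"] by (auto simp: one_sided_iffs)
  qed (use constant_metric_derivatives in blast)
qed

end
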